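(* Suppose Assumptions 1 and 2 hold and run Algorithm 1 with any $\gamma,\alpha>0$. Then for every $t\in\{1,2,\ldots\}$, $$\|\mathbf{Q}(t)\|\le2\gamma G+\frac{\alpha R^2+2DR+2\gamma^2G^2}{\gamma\epsilon}.$$
   Context: Setting: $n,m$ positive integers; $\mathcal{X}_0\subset\mathbb{R}^n$ is a nonempty compact convex set; $\mathbf{g}=(g_1,\ldots,g_m)^{\mathsf T}:\mathbb{R}^n\to\mathbb{R}^m$ with each $g_k$ convex and continuous; $f^t$, $t=0,1,2,\ldots$, are convex differentiable real functions on (a neighborhood of) $\mathcal{X}_0$. All norms are Euclidean. Assumption 1: there are constants $D,\beta,G,R>0$ with $\|\nabla f^t(\mathbf{x})\|\le D$ for all $\mathbf{x}\in\mathcal{X}_0$ and all $t\ge0$; $\|\mathbf{g}(\mathbf{x})-\mathbf{g}(\mathbf{y})\|\le\beta\|\mathbf{x}-\mathbf{y}\|$ for all $\mathbf{x},\mathbf{y}\in\mathcal{X}_0$; $\|\mathbf{g}(\mathbf{x})\|\le G$ for all $\mathbf{x}\in\mathcal{X}_0$; $\|\mathbf{x}-\mathbf{y}\|\le R$ for all $\mathbf{x},\mathbf{y}\in\mathcal{X}_0$. Assumption 2 (Slater condition): there exist $\epsilon>0$ and $\hat{\mathbf{x}}\in\mathcal{X}_0$ with $g_k(\hat{\mathbf{x}})\le-\epsilon$ for all $k\in\{1,\ldots,m\}$. Algorithm 1 (parameters $\gamma>0,\alpha>0$): let $\tilde{\mathbf{g}}(\mathbf{x})=\gamma\mathbf{g}(\mathbf{x})$.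 Choose any $\mathbf{x}(0)\in\mathcal{X}_0$ and set $Q_k(0)=0$ for all $k$. For each $t=0,1,2,\ldots$: set $Q_k(t+1)=\max\{-\tilde g_k(\mathbf{x}(t)),\,Q_k(t)+\tilde g_k(\mathbf{x}(t))\}$ for $k=1,\ldots,m$, and let $\mathbf{x}(t+1)$ be a minimizer over $\mathbf{x}\in\mathcal{X}_0$ of $[\nabla f^t(\mathbf{x}(t))]^{\mathsf T}(\mathbf{x}-\mathbf{x}(t))+[\mathbf{Q}(t+1)+\tilde{\mathbf{g}}(\mathbf{x}(t))]^{\mathsf T}\tilde{\mathbf{g}}(\mathbf{x})+\alpha\|\mathbf{x}-\mathbf{x}(t)\|^2$, where $\mathbf{Q}(t)=(Q_1(t),\ldots,Q_m(t))^{\mathsf T}$. *)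

theory Defs
  imports "HOL-Analysis.Analysis"
begin

text \<open>Objective minimized in the primal update of Algorithm 1 at step t:
  grad is the gradient of f^t at x(t), Qn = Q(t+1), gamma scales g.\<close>
definition alg1_obj ::
  "real \<Rightarrow> real \<Rightarrow> (real^'n \<Rightarrow> real^'m) \<Rightarrow> real^'n \<Rightarrow> real^'n \<Rightarrow> real^'m \<Rightarrow> real^'n \<Rightarrow> real"
  where "alg1_obj \<gamma> \<alpha> g grad xt Qn y =
     grad \<bullet> (y - xt) + (Qn + \<gamma> *\<^sub>R g xt) \<bullet> (\<gamma> *\<^sub>R g y) + \<alpha> * (norm (y - xt))\<^sup>2"

end

theory Submission
  imports Defs
begin

text \<open>Write \<open>P(t) = Q(t+1) + \<gamma> g(x(t))\<close>. Comparing the primal update with the Slater point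
  \<open>xhat\<close> gives \<open>P(t) \<bullet> \<gamma> g(x(t+1)) \<le> D R + \<alpha> R\<^sup>2 - \<gamma> \<epsilon> \<parallel>P(t)\<parallel>\<close>, and the queue update obeys
  \<open>\<parallel>Q(t+2)\<parallel>\<^sup>2 \<le> \<parallel>Q(t+1)\<parallel>\<^sup>2 + 2 Q(t+1) \<bullet> \<gamma> g(x(t+1)) + 2 \<gamma>\<^sup>2 G\<^sup>2\<close>. Together these make
  \<open>\<parallel>Q\<parallel>\<close> non-increasing as soon as it exceeds a threshold \<open>\<theta>\<close>, while a single step never raises
  \<open>\<parallel>Q\<parallel>\<close> by more than \<open>\<gamma> G\<close>; hence \<open>\<parallel>Q(t)\<parallel> \<le> \<theta> + \<gamma> G\<close> throughout.\<close>

lemma bounded_by_threshold_plus_increment: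
  fixes u :: "nat \<Rightarrow> real"
  assumes "u 0 \<le> \<theta> + \<delta>"
    and increment: "\<And>n. u (Suc n) \<le> u n + \<delta>"
    and above_threshold: "\<And>n. \<theta> \<le> u n \<Longrightarrow> u (Suc n) \<le> u n"
  shows "u n \<le> \<theta> + \<delta>"
proof (induction n)
  case 0
  show ?case by (rule assms(1))
next
  case (Suc n)
  then show ?case
    using increment[of n] above_threshold[of n] by (cases "\<theta> \<le> u n") auto
qed

lemma power2_norm_vec: "(norm (v::real^'m))\<^sup>2 = (\<Sum>i\<in>UNIV. (v$i)\<^sup>2)"
  unfolding power2_norm_eq_inner inner_vec_def by (simp add: power2_eq_square)

lemma queue_update_add_nonneg:
  fixes q q' a :: "real^'m"
  assumes "\<forall>k. q' $ k = max (- a $ k) (q $ k + a $ k)"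
  shows "(q' + a) $ k \<ge> 0"
  using assms by (simp add: max_def)

lemma queue_update_nonneg:
  fixes q q' a :: "real^'m"
  assumes "\<forall>k. q' $ k = max (- a $ k) (q $ k + a $ k)" and "\<forall>k. q $ k \<ge> 0"
  shows "q' $ k \<ge> 0"
  using assms(1)[rule_format, of k] assms(2)[rule_format, of k] by linarith

lemma norm_queue_update_le:
  fixes q q' a :: "real^'m"
  assumes "\<forall>k. q' $ k = max (- a $ k) (q $ k + a $ k)" and "\<forall>k. q $ k \<ge> 0"
  shows "norm q' \<le> norm q + norm a"
proof -
  have "norm (q' - q) \<le> norm a"
  proof (rule norm_le_componentwise_cart)
    show "norm ((q' - q) $ i) \<le> norm (a $ i)" for i
      using assms(1)[rule_format, of i] assms(2)[rule_format, of i] by (auto simp: max_def)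
  qed
  moreover have "norm q' \<le> norm q + norm (q' - q)"
    using norm_triangle_ineq[of q "q' - q"] by simp
  ultimately show ?thesis by linarith
qed

lemma power2_norm_queue_update_le:
  fixes q q' a :: "real^'m"
  assumes "\<forall>k. q' $ k = max (- a $ k) (q $ k + a $ k)"
  shows "(norm q')\<^sup>2 \<le> (norm q)\<^sup>2 + 2 * (q \<bullet> a) + 2 * (norm a)\<^sup>2"
proof -
  have "(q'$k)\<^sup>2 \<le> (q$k)\<^sup>2 + 2 * (q$k * a$k) + 2 * (a$k)\<^sup>2" for k
    using assms[rule_format, of k] zero_le_power2[of "q$k + a$k"]
    by (auto simp: max_def power2_eq_square algebra_simps)
  then have "(\<Sum>k\<in>UNIV. (q'$k)\<^sup>2) \<le> (\<Sum>k\<in>UNIV. (q$k)\<^sup>2 + 2 * (q$k * a$k) + 2 * (a$k)\<^sup>2)"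
    by (rule sum_mono)
  then show ?thesis
    by (simp add: power2_norm_vec inner_vec_def sum.distrib sum_distrib_left)
qed

lemma inner_le_neg_norm_of_nonneg:
  fixes p h :: "real^'m"
  assumes "\<forall>k. p $ k \<ge> 0" and "\<forall>k. h $ k \<le> - e" and "e > 0"
  shows "p \<bullet> h \<le> - e * norm p"
proof -
  have "p \<bullet> h = (\<Sum>k\<in>UNIV. p$k * h$k)" by (simp add: inner_vec_def)
  also have "\<dots> \<le> (\<Sum>k\<in>UNIV. - e * \<bar>p$k\<bar>)"
    using assms(1,2) mult_left_mono[of "h $ _" "- e" "p $ _"] by (intro sum_mono) (simp add: mult.commute)
  also have "\<dots> = - e * (\<Sum>k\<in>UNIV. \<bar>p$k\<bar>)" by (simp add: sum_distrib_left)
  also have "\<dots> \<le> - e * norm p"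
    using norm_le_l1_cart[of p] assms(3) by simp
  finally show ?thesis .
qed

lemma alg1_obj_min_le_slater:
  fixes g :: "real^'n \<Rightarrow> real^'m"
  assumes min: "alg1_obj \<gamma> \<alpha> g grad xt Qn xn \<le> alg1_obj \<gamma> \<alpha> g grad xt Qn xhat"
    and "norm grad \<le> D" "norm (xhat - xn) \<le> R" "norm (xhat - xt) \<le> R"
    and P_nonneg: "\<forall>k. (Qn + \<gamma> *\<^sub>R g xt) $ k \<ge> 0"
    and slater: "\<forall>k. g xhat $ k \<le> - \<epsilon>" "\<epsilon> > 0"
    and "\<gamma> > 0" "\<alpha> > 0"
  shows "(Qn + \<gamma> *\<^sub>R g xt) \<bullet> (\<gamma> *\<^sub>R g xn)
           \<le> D * R + \<alpha> * R\<^sup>2 - \<gamma> * \<epsilon> * norm (Qn + \<gamma> *\<^sub>R g xt)"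
proof -
  define P where "P = Qn + \<gamma> *\<^sub>R g xt"
  have grad_diff: "grad \<bullet> (xhat - xt) - grad \<bullet> (xn - xt) \<le> D * R"
  proof -
    have "grad \<bullet> (xhat - xt) - grad \<bullet> (xn - xt) = grad \<bullet> (xhat - xn)"
      by (simp add: inner_diff_right)
    also have "\<dots> \<le> norm grad * norm (xhat - xn)" by (rule norm_cauchy_schwarz)
    also have "\<dots> \<le> D * R"
      using assms(2,3) order_trans[OF norm_ge_zero assms(2)] by (intro mult_mono) auto
    finally show ?thesis .
  qed
  have prox: "\<alpha> * (norm (xhat - xt))\<^sup>2 \<le> \<alpha> * R\<^sup>2"
    using assms(4,9) by (intro mult_left_mono power_mono) auto
  have "P \<bullet> g xhat \<le> - \<epsilon> * norm P"
    using inner_le_neg_norm_of_nonneg[of P] P_nonneg slater by (simp add: P_def)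
  then have slater_term: "P \<bullet> (\<gamma> *\<^sub>R g xhat) \<le> - \<gamma> * \<epsilon> * norm P"
    using mult_left_mono[of _ _ \<gamma>] \<open>\<gamma> > 0\<close> by fastforce
  have "0 \<le> \<alpha> * (norm (xn - xt))\<^sup>2" using \<open>\<alpha> > 0\<close> by simp
  with min grad_diff prox slater_term show ?thesis
    by (simp add: alg1_obj_def P_def algebra_simps)
qed

text \<open>One queue step from \<open>q\<close> with increment \<open>b\<close>, where \<open>a\<close> is the previous increment.\<close>

lemma norm_queue_update_nonincreasing:
  fixes q q' a b :: "real^'m"
  assumes upd: "\<forall>k. q' $ k = max (- b $ k) (q $ k + b $ k)"
    and "norm a \<le> c" "norm b \<le> c"
    and drift: "(q + a) \<bullet> b \<le> K - e * norm (q + a)"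
    and "e > 0"
    and threshold: "c + (K + 2 * c\<^sup>2) / e \<le> norm q"
  shows "norm q' \<le> norm q"
proof -
  have "- (a \<bullet> b) \<le> norm a * norm b"
    using norm_cauchy_schwarz[of "- a" b] by simp
  also have "\<dots> \<le> c\<^sup>2"
    using assms(2,3) order_trans[OF norm_ge_zero assms(2)]
    by (simp add: power2_eq_square mult_mono)
  finally have cross: "- (a \<bullet> b) \<le> c\<^sup>2" .
  have "(norm b)\<^sup>2 \<le> c\<^sup>2" using assms(3) by (intro power_mono) auto
  moreover have "norm (q + a) \<ge> norm q - c"
    using norm_triangle_ineq4[of "q + a" a] assms(2) by simp
  then have "(K + 2 * c\<^sup>2) / e \<le> norm (q + a)"
    using threshold by linarith
  then have "K + 2 * c\<^sup>2 \<le> e * norm (q + a)"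
    using \<open>e > 0\<close> by (simp add: pos_divide_le_eq mult.commute)
  moreover have "q \<bullet> b = (q + a) \<bullet> b - a \<bullet> b" by (simp add: inner_add_left)
  ultimately have "(norm q')\<^sup>2 \<le> (norm q)\<^sup>2"
    using power2_norm_queue_update_le[OF upd] drift cross by linarith
  then show ?thesis by (rule power2_le_imp_le) simp
qed

theorem corollary2:
  fixes X0 :: "(real^'n) set"
    and g :: "real^'n \<Rightarrow> real^'m"
    and f :: "nat \<Rightarrow> real^'n \<Rightarrow> real"
    and gradf :: "nat \<Rightarrow> real^'n \<Rightarrow> real^'n"
    and S :: "(real^'n) set"
    and D \<beta> G R \<epsilon> \<gamma> \<alpha> :: real
    and xhat :: "real^'n"
    and x :: "nat \<Rightarrow> real^'n"
    and Q :: "nat \<Rightarrow> real^'m"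
  assumes X0_ne: "X0 \<noteq> {}" and X0_compact: "compact X0" and X0_convex: "convex X0"
    and g_convex: "\<forall>k. convex_on UNIV (\<lambda>z. g z $ k)"
    and g_cont: "\<forall>k. continuous_on UNIV (\<lambda>z. g z $ k)"
    and S_open: "open S" and S_sup: "X0 \<subseteq> S"
    and f_convex: "\<forall>t. convex_on S (f t)"
    and f_grad: "\<forall>t. \<forall>z\<in>S. (f t has_derivative (\<lambda>h. gradf t z \<bullet> h)) (at z)"
    and consts_pos: "D > 0" "\<beta> > 0" "G > 0" "R > 0"
    and grad_bound: "\<forall>t. \<forall>z\<in>X0. norm (gradf t z) \<le> D"
    and g_lip: "\<forall>y\<in>X0. \<forall>z\<in>X0. norm (g y - g z) \<le> \<beta> * norm (y - z)"
    and g_bound: "\<forall>z\<in>X0. norm (g z) \<le> G"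
    and diam: "\<forall>y\<in>X0. \<forall>z\<in>X0. norm (y - z) \<le> R"
    and slater: "\<epsilon> > 0" "xhat \<in> X0" "\<forall>k. g xhat $ k \<le> - \<epsilon>"
    and params: "\<gamma> > 0" "\<alpha> > 0"
    and x0: "x 0 \<in> X0" and Q0: "Q 0 = 0"
    and Q_upd: "\<forall>t k. Q (Suc t) $ k =
                  max (- (\<gamma> * g (x t) $ k)) (Q t $ k + \<gamma> * g (x t) $ k)"
    and x_upd: "\<forall>t. x (Suc t) \<in> X0 \<and>
                  (\<forall>y\<in>X0. alg1_obj \<gamma> \<alpha> g (gradf t (x t)) (x t) (Q (Suc t)) (x (Suc t))
                           \<le> alg1_obj \<gamma> \<alpha> g (gradf t (x t)) (x t) (Q (Suc t)) y)"
  shows "\<forall>t\<ge>1. norm (Q t) \<le> 2 * \<gamma> * G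
           + (\<alpha> * R\<^sup>2 + 2 * D * R + 2 * \<gamma>\<^sup>2 * G\<^sup>2) / (\<gamma> * \<epsilon>)"
proof -
  define b where "b t = \<gamma> *\<^sub>R g (x t)" for t
  define \<theta> where "\<theta> = \<gamma> * G + (D * R + \<alpha> * R\<^sup>2 + 2 * (\<gamma> * G)\<^sup>2) / (\<gamma> * \<epsilon>)"
  have "\<theta> \<ge> 0"
    unfolding \<theta>_def using consts_pos params slater
    by (intro add_nonneg_nonneg divide_nonneg_pos) auto
  have x_in: "x t \<in> X0" for t
    by (cases t) (use x0 x_upd in auto)
  have b_bound: "norm (b t) \<le> \<gamma> * G" for t
    using g_bound x_in[of t] params by (simp add: b_def mult_left_mono)
  have upd: "\<forall>k. Q (Suc t) $ k = max (- b t $ k) (Q t $ k + b t $ k)" for t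
    using Q_upd by (simp add: b_def)
  have Q_nonneg: "\<forall>k. Q t $ k \<ge> 0" for t
    by (induction t) (use Q0 queue_update_nonneg[OF upd] in auto)
  have drift: "(Q (Suc t) + b t) \<bullet> b (Suc t)
                 \<le> D * R + \<alpha> * R\<^sup>2 - \<gamma> * \<epsilon> * norm (Q (Suc t) + b t)" for t
    unfolding b_def
  proof (rule alg1_obj_min_le_slater[where g = g and grad = "gradf t (x t)" and xt = "x t"
                                        and xn = "x (Suc t)" and xhat = xhat])
    show "\<forall>k. (Q (Suc t) + \<gamma> *\<^sub>R g (x t)) $ k \<ge> 0"
      using queue_update_add_nonneg[OF upd] by (simp add: b_def)
  qed (use x_upd x_in grad_bound diam slater params in auto)
  have "norm (Q (Suc n)) \<le> \<theta> + \<gamma> * G" for n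
  proof (rule bounded_by_threshold_plus_increment[where u = "\<lambda>n. norm (Q (Suc n))"])
    show "norm (Q (Suc 0)) \<le> \<theta> + \<gamma> * G"
      using norm_queue_update_le[OF upd Q_nonneg, of 0] b_bound[of 0] Q0 \<open>\<theta> \<ge> 0\<close> by simp
    show "norm (Q (Suc (Suc n))) \<le> norm (Q (Suc n)) + \<gamma> * G" for n
      using norm_queue_update_le[OF upd Q_nonneg, of "Suc n"] b_bound[of "Suc n"] by simp
    show "norm (Q (Suc (Suc n))) \<le> norm (Q (Suc n))" if "\<theta> \<le> norm (Q (Suc n))" for n
      using norm_queue_update_nonincreasing[OF upd b_bound b_bound drift] that params slater
      by (simp add: \<theta>_def)
  qed
  moreover have "\<theta> + \<gamma> * G \<le> 2 * \<gamma> * G + (\<alpha> * R\<^sup>2 + 2 * D * R + 2 * \<gamma>\<^sup>2 * G\<^sup>2) / (\<gamma> * \<epsilon>)"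
    using consts_pos params slater
    by (simp add: \<theta>_def divide_right_mono power_mult_distrib)
  ultimately show ?thesis
    by (metis Suc_le_D One_nat_def order_trans)
qed

end
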